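(* Let $G=(V,E)$ be a finite directed acyclic graph with $V=\{v_1,\dots,v_n\}$, $G'=(V,E')$ its minimum equivalent graph, $B$ the associated bipartite graph, and $M$ a maximum matching of $B$ (a matching of largest cardinality). Then $\Phi(M)$ satisfies maximum logical concurrency on $G$, and among all stream assignments $f:V\to S$ satisfying maximum logical concurrency on $G$, $\Phi(M)$ attains the minimum value of $\mathrm{min}_{sync}(G,f)$.
   Context: A path from $u$ to $v$ in a directed graph is a nonempty sequence of edges $(u,w_1),\dots,(w_k,v)$ of that graph. The minimum equivalent graph (MEG) of a finite DAG $G=(V,E)$ is the subgraph $G'=(V,E')$, $E'\subseteq E$, with the same vertex set and the smallest number of edges among subgraphs having the same reachability relation as $G$. The bipartite graph $B=(V_1,V_2,E_B)$ has $V_1=\{x_1,\dots,x_n\}$, $V_2=\{y_1,\dots,y_n\}$ and $E_B=\{(x_i,y_j) : (v_i,v_j)\in E'\}$; a matching is a set of edges of $E_B$ no two sharing an endpoint. Let $S=\{s_1,\dots,s_n\}$ be a set of streams; a stream assignment is a function $f:V\to S$. It satisfies maximum logical concurrency on $G$ if for all distinct $u,v\in V$ with no path between them in either direction in $G$, $f(u)\neq f(v)$. For a matching $m$, $\Phi(m)$ is the stream assignment obtained by starting from the partition $\{\{v_1\},\dots,\{v_n\}\}$, merging, for each $(x_i,y_j)\in m$, the blocks containing $v_i$ and $v_j$, and assigning two vertices the same stream iff they lie in the same block. A synchronization plan $\Lambda\subseteq E$ is safe for $f$ on $G$ if for every edge $(u,v)\in E$, either $f(u)=f(v)$ or there is a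 path $P\subseteq E$ from $u$ to $v$ with $P\cap\Lambda\neq\emptyset$; $\mathrm{min}_{sync}(G,f)=\min\{|\Lambda| : \Lambda\subseteq E \text{ safe for } f \text{ on } G\}$. *)

theory Defs
  imports "HOL-Library.FuncSet"
begin

text \<open>Reachability in a digraph given by an edge set: paths are nonempty sequences of
  edges, so reachability is the transitive closure.\<close>

definition is_MEG :: "'a set \<Rightarrow> ('a \<times> 'a) set \<Rightarrow> ('a \<times> 'a) set \<Rightarrow> bool" where
  "is_MEG V E E' \<longleftrightarrow> E' \<subseteq> E \<and> E'\<^sup>+ = E\<^sup>+ \<and>
     (\<forall>E''. E'' \<subseteq> E \<and> E''\<^sup>+ = E\<^sup>+ \<longrightarrow> card E' \<le> card E'')"

text \<open>Bipartite graph B: left copy x_i = Inl v_i, right copy y_j = Inr v_j.\<close>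
definition bip_edges :: "('a \<times> 'a) set \<Rightarrow> ('a + 'a) set set" where
  "bip_edges E' = {{Inl u, Inr v} | u v. (u, v) \<in> E'}"

definition is_matching :: "('b set) set \<Rightarrow> ('b set) set \<Rightarrow> bool" where
  "is_matching EB m \<longleftrightarrow> m \<subseteq> EB \<and> (\<forall>e1\<in>m. \<forall>e2\<in>m. e1 \<noteq> e2 \<longrightarrow> e1 \<inter> e2 = {})"

definition is_max_matching :: "('b set) set \<Rightarrow> ('b set) set \<Rightarrow> bool" where
  "is_max_matching EB M \<longleftrightarrow> is_matching EB M \<and>
     (\<forall>m. is_matching EB m \<longrightarrow> card m \<le> card M)"

text \<open>The partition produced by Phi(m): merging blocks of v_i and v_j for each (x_i,y_j) in m
  yields the classes of the equivalence closure on V of these pairs.\<close>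
definition phi_rel :: "'a set \<Rightarrow> ('a + 'a) set set \<Rightarrow> ('a \<times> 'a) set" where
  "phi_rel V m = (let R = {(u, v). {Inl u, Inr v} \<in> m} in
      ((R \<union> R\<inverse>)\<^sup>* \<inter> (V \<times> V)))"

definition max_logical_concurrency :: "'a set \<Rightarrow> ('a \<times> 'a) set \<Rightarrow> ('a \<Rightarrow> 's) \<Rightarrow> bool" where
  "max_logical_concurrency V E f \<longleftrightarrow>
     (\<forall>u\<in>V. \<forall>v\<in>V. u \<noteq> v \<and> (u, v) \<notin> E\<^sup>+ \<and> (v, u) \<notin> E\<^sup>+ \<longrightarrow> f u \<noteq> f v)"

definition is_path :: "('a \<times> 'a) set \<Rightarrow> 'a \<Rightarrow> 'a \<Rightarrow> 'a list \<Rightarrow> bool" where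
  "is_path E u v xs \<longleftrightarrow> length xs \<ge> 2 \<and> hd xs = u \<and> last xs = v \<and>
     set (zip xs (tl xs)) \<subseteq> E"

definition path_edges :: "'a list \<Rightarrow> ('a \<times> 'a) set" where
  "path_edges xs = set (zip xs (tl xs))"

definition safe_plan :: "('a \<times> 'a) set \<Rightarrow> ('a \<Rightarrow> 's) \<Rightarrow> ('a \<times> 'a) set \<Rightarrow> bool" where
  "safe_plan E f \<Lambda> \<longleftrightarrow> \<Lambda> \<subseteq> E \<and>
     (\<forall>(u, v)\<in>E. f u = f v \<or> (\<exists>xs. is_path E u v xs \<and> path_edges xs \<inter> \<Lambda> \<noteq> {}))"

definition min_sync :: "('a \<times> 'a) set \<Rightarrow> ('a \<Rightarrow> 's) \<Rightarrow> nat" where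
  "min_sync E f = Min {card \<Lambda> | \<Lambda>. safe_plan E f \<Lambda>}"

end

theory Submission
  imports Defs
begin

(* A minimum equivalent graph of a finite DAG has no edge (u, v) that is bypassed by a longer
   path u -> w -> v: deleting it would preserve reachability. Hence every path from u to v
   along a MEG edge is that edge itself, so the MEG edges joining different streams must all
   belong to any safe plan, and they already form one: min_sync E f is |E'| minus the number
   of MEG edges inside a stream. Under maximum logical concurrency two stream-internal MEG
   edges with a common tail or head would create such a detour, so the internal edges form a
   matching of B; conversely the edges of M lie inside the blocks of Phi(M). So Phi(M)
   maximises the number of internal MEG edges. Its blocks are chains of matched E' edges,
   hence totally ordered by reachability, which gives maximum logical concurrency. *)

lemma trancl_insert_redundant:
  assumes "(u, v) \<in> r\<^sup>+"
  shows "(insert (u, v) r)\<^sup>+ = r\<^sup>+"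
proof
  show "(insert (u, v) r)\<^sup>+ \<subseteq> r\<^sup>+"
    using assms by (auto simp: trancl_insert intro: rtrancl_trancl_trancl trancl_rtrancl_trancl)
qed (auto intro: trancl_mono)

lemma rtrancl_symcl_single_valued:
  assumes "single_valued R" and "single_valued (R\<inverse>)"
    and "(x, y) \<in> (R \<union> R\<inverse>)\<^sup>*"
  shows "(x, y) \<in> R\<^sup>* \<or> (y, x) \<in> R\<^sup>*"
  using assms(3)
proof (induction rule: rtrancl_induct)
  case base
  show ?case by simp
next
  case (step y z)
  from step.hyps(2) show ?case
  proof
    assume yz: "(y, z) \<in> R"
    from step.IH show ?thesis
    proof
      assume "(x, y) \<in> R\<^sup>*"
      with yz show ?thesis by auto
    next
      assume "(y, x) \<in> R\<^sup>*"
      with yz single_valued_confluent[OF assms(1)] show ?thesis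
        by (meson r_into_rtrancl)
    qed
  next
    assume "(y, z) \<in> R\<inverse>"
    then have zy: "(z, y) \<in> R" by simp
    from step.IH show ?thesis
    proof
      assume "(y, x) \<in> R\<^sup>*"
      with zy show ?thesis by (meson converse_rtrancl_into_rtrancl)
    next
      assume "(x, y) \<in> R\<^sup>*"
      then have "(y, x) \<in> (R\<inverse>)\<^sup>*" and "(y, z) \<in> (R\<inverse>)\<^sup>*"
        using zy by (simp_all add: rtrancl_converse)
      with single_valued_confluent[OF assms(2)] show ?thesis
        by (auto simp: rtrancl_converse)
    qed
  qed
qed

lemma is_path_trancl:
  assumes "is_path E u v xs"
  shows "(u, v) \<in> E\<^sup>+"
proof -
  have "(hd xs, last xs) \<in> E\<^sup>+" if "length xs \<ge> 2" "set (zip xs (tl xs)) \<subseteq> E" for xs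
    using that
  proof (induction xs)
    case Nil
    then show ?case by simp
  next
    case (Cons a xs)
    then obtain b ys where xs: "xs = b # ys" by (cases xs) auto
    with Cons.prems have ab: "(a, b) \<in> E" by simp
    show ?case
    proof (cases "ys = []")
      case True
      with xs ab show ?thesis by simp
    next
      case False
      with Cons xs have "(b, last xs) \<in> E\<^sup>+" by (cases ys) auto
      with ab xs show ?thesis by (simp add: trancl_into_trancl2)
    qed
  qed
  with assms show ?thesis unfolding is_path_def by blast
qed

lemma trancl_is_path:
  assumes "(u, v) \<in> E\<^sup>+"
  obtains xs where "is_path E u v xs"
proof -
  from assms have "\<exists>xs. is_path E u v xs"
  proof (induction rule: converse_trancl_induct)
    case (base u)
    then show ?case by (intro exI[of _ "[u, v]"]) (simp add: is_path_def)
  next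
    case (step u w)
    then obtain xs where xs: "is_path E w v xs" by blast
    then obtain ys where "xs = w # ys" "ys \<noteq> []"
      unfolding is_path_def by (cases xs) force+
    with xs step.hyps(1) have "is_path E u v (u # xs)"
      by (auto simp: is_path_def Suc_le_length_iff neq_Nil_conv)
    then show ?case by blast
  qed
  with that show ?thesis by blast
qed

lemma is_path_ConsD:
  assumes "is_path E u v (u # w # ys)" and "ys \<noteq> []"
  shows "(u, w) \<in> E" and "is_path E w v (w # ys)"
  using assms by (auto simp: is_path_def Suc_le_length_iff neq_Nil_conv)

lemma is_path_subset: "is_path E u v xs \<Longrightarrow> E \<subseteq> F \<Longrightarrow> is_path F u v xs"
  unfolding is_path_def by blast

lemma ex_path_edge_label_change:
  assumes "xs \<noteq> []" and "h (hd xs) \<noteq> h (last xs)"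
  shows "\<exists>(a, b) \<in> path_edges xs. h a \<noteq> h b"
  using assms
proof (induction xs)
  case Nil
  then show ?case by simp
next
  case (Cons a xs)
  show ?case
  proof (cases xs)
    case Nil
    with Cons.prems show ?thesis by simp
  next
    case (Cons b ys)
    with Cons.IH Cons.prems show ?thesis
      by (cases "h a = h b") (auto simp: path_edges_def)
  qed
qed

lemma is_MEG_edge_no_detour:
  assumes "finite E" and "acyclic E" and "is_MEG V E E'"
    and "(u, v) \<in> E'" and "(u, w) \<in> E\<^sup>+" and "(w, v) \<in> E\<^sup>+"
  shows False
proof -
  from assms(3) have sub: "E' \<subseteq> E" and cl: "E'\<^sup>+ = E\<^sup>+"
    and minimal: "\<And>E''. E'' \<subseteq> E \<Longrightarrow> E''\<^sup>+ = E\<^sup>+ \<Longrightarrow> card E' \<le> card E''"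
    unfolding is_MEG_def by auto
  define E0 where "E0 = E' - {(u, v)}"
  have E'_eq: "E' = insert (u, v) E0" using assms(4) E0_def by auto
  have E0_rtrancl: "E0\<^sup>* \<subseteq> E\<^sup>*" using sub E0_def by (intro rtrancl_mono) auto
  have no_cycle: "(x, y) \<notin> E0\<^sup>*" if "(y, x) \<in> E\<^sup>+" for x y
    using that assms(2) E0_rtrancl unfolding acyclic_def by (meson subsetD trancl_rtrancl_trancl)
  have cl0: "E\<^sup>+ = E0\<^sup>+ \<union> {(a, b). (a, u) \<in> E0\<^sup>* \<and> (v, b) \<in> E0\<^sup>*}"
    using cl E'_eq trancl_insert by metis
  have "(u, w) \<in> E0\<^sup>+" using cl0 assms(5) no_cycle[OF assms(6)] by auto
  moreover have "(w, v) \<in> E0\<^sup>+" using cl0 assms(6) no_cycle[OF assms(5)] by auto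
  ultimately have "(u, v) \<in> E0\<^sup>+" by (rule trancl_trans)
  then have "E0\<^sup>+ = E\<^sup>+" using cl E'_eq trancl_insert_redundant by metis
  then have "card E' \<le> card E0" using minimal[of E0] sub unfolding E0_def by blast
  moreover have "card E0 < card E'"
    unfolding E0_def using assms(1,4) sub by (meson card_Diff1_less finite_subset)
  ultimately show False by simp
qed

lemma is_MEG_edge_path:
  assumes "finite E" and "acyclic E" and "is_MEG V E E'"
    and "(u, v) \<in> E'" and "is_path E u v xs"
  shows "xs = [u, v]"
proof -
  from assms(5) obtain w ys where xs: "xs = u # w # ys"
    unfolding is_path_def by (cases xs; cases "tl xs") auto
  show ?thesis
  proof (cases "ys = []")
    case True
    with xs assms(5) show ?thesis by (simp add: is_path_def)
  next
    case False
    from is_path_ConsD[OF assms(5)[unfolded xs] False]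
    have "(u, w) \<in> E\<^sup>+" and "(w, v) \<in> E\<^sup>+" by (auto intro: is_path_trancl)
    from is_MEG_edge_no_detour[OF assms(1-4) this] show ?thesis ..
  qed
qed

definition intra_stream_edges :: "('a \<times> 'a) set \<Rightarrow> ('a \<Rightarrow> 's) \<Rightarrow> ('a \<times> 'a) set" where
  "intra_stream_edges E h = {(u, v) \<in> E. h u = h v}"

lemma intra_stream_edges_subset: "intra_stream_edges E h \<subseteq> E"
  unfolding intra_stream_edges_def by auto

lemma safe_plan_MEG_cross_edges:
  assumes "is_MEG V E E'"
  shows "safe_plan E h (E' - intra_stream_edges E' h)"
  unfolding safe_plan_def
proof (intro conjI ballI)
  from assms have sub: "E' \<subseteq> E" and cl: "E'\<^sup>+ = E\<^sup>+" unfolding is_MEG_def by auto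
  then show "E' - intra_stream_edges E' h \<subseteq> E" by blast
  fix e assume "e \<in> E"
  obtain a b where e: "e = (a, b)" by fastforce
  have "\<exists>xs. is_path E a b xs \<and> path_edges xs \<inter> (E' - intra_stream_edges E' h) \<noteq> {}"
    if "h a \<noteq> h b"
  proof -
    from \<open>e \<in> E\<close> e cl obtain xs where xs: "is_path E' a b xs"
      using trancl_is_path[of a b E'] by auto
    then have "xs \<noteq> []" "hd xs = a" "last xs = b" unfolding is_path_def by auto
    with that have "\<exists>(c, d) \<in> path_edges xs. h c \<noteq> h d"
      using ex_path_edge_label_change[of xs h] by simp
    then obtain c d where cd: "(c, d) \<in> path_edges xs" "h c \<noteq> h d" by blast
    with xs have "(c, d) \<in> E' - intra_stream_edges E' h"
      by (auto simp: is_path_def path_edges_def intra_stream_edges_def)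
    moreover have "is_path E a b xs" using xs sub by (rule is_path_subset)
    ultimately show ?thesis using cd by blast
  qed
  with e show "case e of (u, v) \<Rightarrow> h u = h v \<or>
      (\<exists>xs. is_path E u v xs \<and> path_edges xs \<inter> (E' - intra_stream_edges E' h) \<noteq> {})"
    by auto
qed

lemma MEG_cross_edges_subset_safe_plan:
  assumes "finite E" and "acyclic E" and "is_MEG V E E'" and "safe_plan E h L"
  shows "E' - intra_stream_edges E' h \<subseteq> L"
proof
  fix e assume e: "e \<in> E' - intra_stream_edges E' h"
  obtain a b where ab: "e = (a, b)" by fastforce
  with e assms(3) have "(a, b) \<in> E'" "(a, b) \<in> E" "h a \<noteq> h b"
    by (auto simp: is_MEG_def intra_stream_edges_def)
  with assms(4) obtain xs where "is_path E a b xs" "path_edges xs \<inter> L \<noteq> {}"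
    unfolding safe_plan_def by blast
  moreover from this have "xs = [a, b]"
    using is_MEG_edge_path[OF assms(1-3) \<open>(a, b) \<in> E'\<close>] by blast
  ultimately show "e \<in> L" using ab by (simp add: path_edges_def)
qed

lemma min_sync_MEG:
  assumes "finite E" and "acyclic E" and "is_MEG V E E'"
  shows "min_sync E h = card (E' - intra_stream_edges E' h)"
  unfolding min_sync_def
proof (rule Min_eqI)
  have "{card L | L. safe_plan E h L} \<subseteq> card ` Pow E"
    unfolding safe_plan_def by blast
  then show "finite {card L | L. safe_plan E h L}"
    using assms(1) finite_subset by blast
  show "card (E' - intra_stream_edges E' h) \<in> {card L | L. safe_plan E h L}"
    using safe_plan_MEG_cross_edges[OF assms(3)] by blast
  fix n assume "n \<in> {card L | L. safe_plan E h L}"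
  then obtain L where "n = card L" "safe_plan E h L" by blast
  moreover from this have "finite L"
    using assms(1) unfolding safe_plan_def by (meson finite_subset)
  ultimately show "card (E' - intra_stream_edges E' h) \<le> n"
    using MEG_cross_edges_subset_safe_plan[OF assms] by (metis card_mono)
qed

definition bip_edge :: "'a \<times> 'a \<Rightarrow> ('a + 'a) set" where
  "bip_edge = (\<lambda>(u, v). {Inl u, Inr v})"

definition matched_pairs :: "('a + 'a) set set \<Rightarrow> ('a \<times> 'a) set" where
  "matched_pairs m = {(u, v). {Inl u, Inr v} \<in> m}"

lemma inj_bip_edge: "inj bip_edge"
  unfolding bip_edge_def inj_def by (auto simp: doubleton_eq_iff)

lemma bip_edges_eq_image: "bip_edges E = bip_edge ` E"
  unfolding bip_edges_def bip_edge_def by auto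

lemma phi_rel_matched_pairs:
  "phi_rel V m = (matched_pairs m \<union> (matched_pairs m)\<inverse>)\<^sup>* \<inter> V \<times> V"
  unfolding phi_rel_def matched_pairs_def Let_def ..

lemma matching_eq_image_matched_pairs:
  assumes "is_matching (bip_edges E) m"
  shows "m = bip_edge ` matched_pairs m"
  using assms unfolding is_matching_def bip_edges_eq_image matched_pairs_def bip_edge_def
  by fastforce

lemma is_matching_bip_edges_iff:
  "is_matching (bip_edges E) (bip_edge ` D) \<longleftrightarrow>
     D \<subseteq> E \<and> single_valued D \<and> single_valued (D\<inverse>)"
proof -
  have "bip_edge ` D \<subseteq> bip_edges E \<longleftrightarrow> D \<subseteq> E"
    unfolding bip_edges_eq_image by (simp add: inj_image_subset_iff[OF inj_bip_edge])
  moreover have "(\<forall>e1\<in>bip_edge ` D. \<forall>e2\<in>bip_edge ` D. e1 \<noteq> e2 \<longrightarrow> e1 \<inter> e2 = {}) \<longleftrightarrow>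
      (\<forall>(a, b)\<in>D. \<forall>(c, d)\<in>D. a = c \<or> b = d \<longrightarrow> (a, b) = (c, d))"
    unfolding bip_edge_def by (auto simp: doubleton_eq_iff; fastforce)
  moreover have "(\<forall>(a, b)\<in>D. \<forall>(c, d)\<in>D. a = c \<or> b = d \<longrightarrow> (a, b) = (c, d)) \<longleftrightarrow>
      single_valued D \<and> single_valued (D\<inverse>)"
    unfolding single_valued_def by blast
  ultimately show ?thesis unfolding is_matching_def by simp
qed

lemma matched_pairs_of_matching:
  assumes "is_matching (bip_edges E) m"
  shows "matched_pairs m \<subseteq> E" and "single_valued (matched_pairs m)"
    and "single_valued ((matched_pairs m)\<inverse>)"
  using assms is_matching_bip_edges_iff[of E "matched_pairs m"]
  by (simp_all flip: matching_eq_image_matched_pairs[OF assms])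

lemma max_logical_concurrency_phi:
  assumes "E' \<subseteq> E" and "is_matching (bip_edges E') M"
    and "\<forall>u\<in>V. \<forall>v\<in>V. f u = f v \<longleftrightarrow> (u, v) \<in> phi_rel V M"
  shows "max_logical_concurrency V E f"
  unfolding max_logical_concurrency_def
proof (intro ballI impI)
  let ?R = "matched_pairs M"
  fix u v assume uv: "u \<in> V" "v \<in> V" and unrelated: "u \<noteq> v \<and> (u, v) \<notin> E\<^sup>+ \<and> (v, u) \<notin> E\<^sup>+"
  show "f u \<noteq> f v"
  proof
    assume "f u = f v"
    with assms(3) uv have "(u, v) \<in> (?R \<union> ?R\<inverse>)\<^sup>*" by (simp add: phi_rel_matched_pairs)
    then have "(u, v) \<in> ?R\<^sup>* \<or> (v, u) \<in> ?R\<^sup>*"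
      by (rule rtrancl_symcl_single_valued[OF matched_pairs_of_matching(2,3)[OF assms(2)]])
    moreover have "?R\<^sup>* \<subseteq> E\<^sup>*"
      using matched_pairs_of_matching(1)[OF assms(2)] assms(1) by (simp add: rtrancl_mono)
    ultimately have "(u, v) \<in> E\<^sup>* \<or> (v, u) \<in> E\<^sup>*" by blast
    with unrelated show False by (simp add: rtrancl_eq_or_trancl)
  qed
qed

lemma card_matching_le_intra_stream_edges:
  assumes "finite E'" and "E' \<subseteq> V \<times> V" and "is_matching (bip_edges E') M"
    and "\<forall>u\<in>V. \<forall>v\<in>V. f u = f v \<longleftrightarrow> (u, v) \<in> phi_rel V M"
  shows "card M \<le> card (intra_stream_edges E' f)"
proof -
  let ?R = "matched_pairs M"
  have "?R \<subseteq> intra_stream_edges E' f"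
  proof
    fix e assume "e \<in> ?R"
    moreover obtain u v where e: "e = (u, v)" by fastforce
    ultimately have "(u, v) \<in> E'" "(u, v) \<in> phi_rel V M"
      using matched_pairs_of_matching(1)[OF assms(3)] assms(2)
      by (auto simp: phi_rel_matched_pairs)
    with assms(2,4) e show "e \<in> intra_stream_edges E' f"
      by (auto simp: intra_stream_edges_def)
  qed
  moreover have "finite (intra_stream_edges E' f)"
    using assms(1) intra_stream_edges_subset by (rule finite_subset[rotated])
  ultimately have "card ?R \<le> card (intra_stream_edges E' f)" by (rule card_mono[rotated])
  moreover have "card M = card ?R"
    by (subst matching_eq_image_matched_pairs[OF assms(3)])
      (simp add: card_image inj_on_subset[OF inj_bip_edge])
  ultimately show ?thesis by simp
qed

lemma single_valued_intra_stream_edges_MEG: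
  assumes "finite E" and "acyclic E" and "E \<subseteq> V \<times> V" and "is_MEG V E E'"
    and "max_logical_concurrency V E g"
  shows "single_valued (intra_stream_edges E' g)"
    and "single_valued ((intra_stream_edges E' g)\<inverse>)"
proof -
  note no_detour = is_MEG_edge_no_detour[OF assms(1,2,4)]
  from assms(3,4) have E': "E' \<subseteq> E" "E' \<subseteq> V \<times> V" unfolding is_MEG_def by auto
  have comparable: "(x, y) \<in> E\<^sup>+ \<or> (y, x) \<in> E\<^sup>+"
    if "(a, x) \<in> E' \<or> (x, a) \<in> E'" "(a, y) \<in> E' \<or> (y, a) \<in> E'" "x \<noteq> y" "g x = g y" for a x y
    using assms(5) that E'(2) unfolding max_logical_concurrency_def by blast
  show "single_valued (intra_stream_edges E' g)"
  proof (rule single_valuedI, rule ccontr)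
    fix a b d assume "(a, b) \<in> intra_stream_edges E' g" "(a, d) \<in> intra_stream_edges E' g" "b \<noteq> d"
    then have ab: "(a, b) \<in> E'" and ad: "(a, d) \<in> E'" and "g b = g d"
      by (auto simp: intra_stream_edges_def)
    with comparable[of a b d] \<open>b \<noteq> d\<close> have "(b, d) \<in> E\<^sup>+ \<or> (d, b) \<in> E\<^sup>+" by blast
    moreover have "(a, b) \<in> E\<^sup>+" "(a, d) \<in> E\<^sup>+" using ab ad E'(1) by auto
    ultimately show False using no_detour[OF ab] no_detour[OF ad] by blast
  qed
  show "single_valued ((intra_stream_edges E' g)\<inverse>)"
  proof (rule single_valuedI, rule ccontr)
    fix b a c assume "(b, a) \<in> (intra_stream_edges E' g)\<inverse>" "(b, c) \<in> (intra_stream_edges E' g)\<inverse>"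
      "a \<noteq> c"
    then have ab: "(a, b) \<in> E'" and cb: "(c, b) \<in> E'" and "g a = g c"
      by (auto simp: intra_stream_edges_def)
    with comparable[of b a c] \<open>a \<noteq> c\<close> have "(a, c) \<in> E\<^sup>+ \<or> (c, a) \<in> E\<^sup>+" by blast
    moreover have "(a, b) \<in> E\<^sup>+" "(c, b) \<in> E\<^sup>+" using ab cb E'(1) by auto
    ultimately show False using no_detour[OF ab] no_detour[OF cb] by blast
  qed
qed

lemma card_intra_stream_edges_le_max_matching:
  assumes "finite E" and "acyclic E" and "E \<subseteq> V \<times> V" and "is_MEG V E E'"
    and "is_max_matching (bip_edges E') M" and "max_logical_concurrency V E g"
  shows "card (intra_stream_edges E' g) \<le> card M"
proof -
  from assms(4) have "intra_stream_edges E' g \<subseteq> E'"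
    using intra_stream_edges_subset by blast
  with single_valued_intra_stream_edges_MEG[OF assms(1-4,6)]
  have "is_matching (bip_edges E') (bip_edge ` intra_stream_edges E' g)"
    by (simp add: is_matching_bip_edges_iff)
  with assms(5) have "card (bip_edge ` intra_stream_edges E' g) \<le> card M"
    unfolding is_max_matching_def by blast
  then show ?thesis by (simp add: card_image inj_on_subset[OF inj_bip_edge])
qed

theorem theorem4:
  fixes V :: "'a set" and E E' :: "('a \<times> 'a) set" and S :: "'s set"
    and M :: "('a + 'a) set set" and f :: "'a \<Rightarrow> 's"
  assumes "finite V" and "E \<subseteq> V \<times> V" and "acyclic E"
    and "card S = card V"
    and "is_MEG V E E'"
    and "is_max_matching (bip_edges E') M"
    and "f \<in> V \<rightarrow> S"
    and "\<forall>u\<in>V. \<forall>v\<in>V. f u = f v \<longleftrightarrow> (u, v) \<in> phi_rel V M"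
  shows "max_logical_concurrency V E f \<and>
         (\<forall>g. g \<in> V \<rightarrow> S \<and> max_logical_concurrency V E g \<longrightarrow> min_sync E f \<le> min_sync E g)"
  \<comment> \<open>The stream set S is irrelevant: only the partition of V induced by an assignment matters.\<close>
proof (intro conjI allI impI)
  have "finite E" using assms(1,2) finite_subset by blast
  from assms(5) have "E' \<subseteq> E" unfolding is_MEG_def by simp
  then have "finite E'" and "E' \<subseteq> V \<times> V" using \<open>finite E\<close> assms(2) finite_subset by blast+
  have matching: "is_matching (bip_edges E') M"
    using assms(6) unfolding is_max_matching_def by simp
  show "max_logical_concurrency V E f"
    using \<open>E' \<subseteq> E\<close> matching assms(8) by (rule max_logical_concurrency_phi)
  fix g assume "g \<in> V \<rightarrow> S \<and> max_logical_concurrency V E g"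
  then have "card (intra_stream_edges E' g) \<le> card (intra_stream_edges E' f)"
    using card_intra_stream_edges_le_max_matching[OF \<open>finite E\<close> assms(3,2,5,6)]
      card_matching_le_intra_stream_edges[OF \<open>finite E'\<close> \<open>E' \<subseteq> V \<times> V\<close> matching assms(8)]
    by (meson le_trans)
  moreover have card_cross:
    "card (E' - intra_stream_edges E' h) = card E' - card (intra_stream_edges E' h)" for h
    using \<open>finite E'\<close> by (meson card_Diff_subset finite_subset intra_stream_edges_subset)
  ultimately show "min_sync E f \<le> min_sync E g"
    by (simp only: min_sync_MEG[OF \<open>finite E\<close> assms(3,5)] card_cross diff_le_mono2)
qed

end
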